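(* For every tree $T$ of order $n \ge 3$, $$\operatorname{irr}(T) > n \operatorname{Var}(T).$$
   Context: For a graph $G=(V,E)$ of order $n$ and size $m$, $d(u)$ denotes the degree of a vertex $u$. The (Albertson) irregularity is $\operatorname{irr}(G)=\sum_{uv\in E}|d(u)-d(v)|$. The degree variance is $\operatorname{Var}(G)=\frac{1}{n}\sum_{u\in V}(d(u)-\overline d)^2$, where $\overline d = 2m/n$ is the average degree. *)

theory Defs
  imports Complex_Main
begin

definition simple_graph :: "'a set \<Rightarrow> 'a set set \<Rightarrow> bool" where
  "simple_graph V E \<longleftrightarrow> finite V \<and> (\<forall>e\<in>E. e \<subseteq> V \<and> card e = 2)"

definition degree :: "'a set set \<Rightarrow> 'a \<Rightarrow> nat" where
  "degree E u = card {e \<in> E. u \<in> e}"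

fun is_walk :: "'a set set \<Rightarrow> 'a list \<Rightarrow> bool" where
  "is_walk E [] = False"
| "is_walk E [x] = True"
| "is_walk E (x # y # xs) = ({x, y} \<in> E \<and> is_walk E (y # xs))"

definition connected_graph :: "'a set \<Rightarrow> 'a set set \<Rightarrow> bool" where
  "connected_graph V E \<longleftrightarrow> V \<noteq> {} \<and>
     (\<forall>u\<in>V. \<forall>v\<in>V. \<exists>p. is_walk E p \<and> hd p = u \<and> last p = v)"

definition has_cycle :: "'a set set \<Rightarrow> bool" where
  "has_cycle E \<longleftrightarrow> (\<exists>p. length p \<ge> 3 \<and> distinct p \<and> is_walk E (p @ [hd p]))"

definition is_tree :: "'a set \<Rightarrow> 'a set set \<Rightarrow> bool" where
  "is_tree V E \<longleftrightarrow> simple_graph V E \<and> connected_graph V E \<and> \<not> has_cycle E"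

(* sum over edges uv of |d(u)-d(v)|; each edge {u,v} counted as the two ordered pairs, hence 1/2 *)
definition irr :: "'a set \<Rightarrow> 'a set set \<Rightarrow> real" where
  "irr V E = (1/2) * (\<Sum>(u,v)\<in>{(u,v). u \<in> V \<and> v \<in> V \<and> {u,v} \<in> E}.
                 \<bar>real (degree E u) - real (degree E v)\<bar>)"

definition avg_degree :: "'a set \<Rightarrow> 'a set set \<Rightarrow> real" where
  "avg_degree V E = 2 * real (card E) / real (card V)"

definition degree_variance :: "'a set \<Rightarrow> 'a set set \<Rightarrow> real" where
  "degree_variance V E = (1 / real (card V)) * (\<Sum>u\<in>V. (real (degree E u) - avg_degree V E)^2)"

end

theory Submission
  imports Defs
begin

(* Let d be the degree function and m = n - 1 the number of edges. Writing
   |d u - d v| = d u + d v - 2 min (d u) (d v) gives irr T = sum d^2 - 2 S, where S is the sum of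
   min (d u) (d v) over the edges, while n Var T = sum d^2 - 4 m^2 / n. Rooting T at a vertex r of
   degree at least 2, every edge joins some v \<noteq> r to its parent, so S is at most the sum of d v
   over v \<noteq> r, which is 2 m - d r \<le> 2 m - 2 < 2 m^2 / n = 2 m - 2 + 2 / n. *)

definition neighbors :: "'a set \<Rightarrow> 'a set set \<Rightarrow> 'a \<Rightarrow> 'a set" where
  "neighbors V E u = {v \<in> V. {u, v} \<in> E}"

definition arcs :: "'a set \<Rightarrow> 'a set set \<Rightarrow> ('a \<times> 'a) set" where
  "arcs V E = {(u, v). u \<in> V \<and> v \<in> V \<and> {u, v} \<in> E}"

lemma simple_graph_finite_edges: "simple_graph V E \<Longrightarrow> finite E"
  unfolding simple_graph_def by (meson PowI finite_Pow_iff finite_subset subsetI)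

lemma simple_graph_edgeD:
  "simple_graph V E \<Longrightarrow> {u, v} \<in> E \<Longrightarrow> u \<in> V \<and> v \<in> V \<and> u \<noteq> v"
  unfolding simple_graph_def by fastforce

lemma simple_graph_edge_obtain:
  assumes "simple_graph V E" "e \<in> E" "u \<in> e"
  obtains v where "e = {u, v}"
  using assms unfolding simple_graph_def by (metis card_2_iff insert_commute insertE singletonD)

lemma card_neighbors:
  assumes "simple_graph V E"
  shows "card (neighbors V E u) = degree E u"
  unfolding degree_def
proof (rule bij_betw_same_card)
  show "bij_betw (\<lambda>v. {u, v}) (neighbors V E u) {e \<in> E. u \<in> e}"
  proof (rule bij_betwI')
    fix e assume "e \<in> {e \<in> E. u \<in> e}"
    then obtain v where "e = {u, v}" "e \<in> E"
      using simple_graph_edge_obtain[OF assms] by blast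
    then show "\<exists>v\<in>neighbors V E u. e = {u, v}"
      using simple_graph_edgeD[OF assms] by (auto simp: neighbors_def)
  qed (auto simp: neighbors_def doubleton_eq_iff)
qed

lemma sum_degree:
  assumes "simple_graph V E"
  shows "(\<Sum>u\<in>V. degree E u) = 2 * card E"
proof -
  have finV: "finite V" and finE: "finite E"
    using assms simple_graph_finite_edges by (auto simp: simple_graph_def)
  have "(\<Sum>u\<in>V. degree E u) = (\<Sum>u\<in>V. \<Sum>e\<in>E. of_bool (u \<in> e) :: nat)"
    using finE by (simp add: degree_def Collect_conj_eq Int_commute)
  also have "\<dots> = (\<Sum>e\<in>E. \<Sum>u\<in>V. of_bool (u \<in> e))"
    by (rule sum.swap)
  also have "\<dots> = (\<Sum>e\<in>E. 2)"
  proof (rule sum.cong)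
    fix e assume "e \<in> E"
    then have "V \<inter> e = e" "card e = 2"
      using assms by (auto simp: simple_graph_def)
    then show "(\<Sum>u\<in>V. of_bool (u \<in> e)) = (2 :: nat)"
      using finV by simp
  qed simp
  finally show ?thesis
    by simp
qed

lemma sum_squared_deviation:
  fixes f :: "'a \<Rightarrow> real"
  assumes "finite A"
  shows "(\<Sum>x\<in>A. (f x - (\<Sum>y\<in>A. f y) / card A)^2)
           = (\<Sum>x\<in>A. (f x)^2) - (\<Sum>x\<in>A. f x)^2 / card A"
proof (cases "A = {}")
  case False
  define s where "s = (\<Sum>y\<in>A. f y)"
  have "card A > 0"
    using assms False by (simp add: card_gt_0_iff)
  have "(\<Sum>x\<in>A. (f x - s / card A)^2)
          = (\<Sum>x\<in>A. (f x)^2 - 2 * (s / card A) * f x + (s / card A)^2)"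
    by (rule sum.cong) (simp_all add: power2_diff)
  also have "\<dots> = (\<Sum>x\<in>A. (f x)^2) - 2 * (s / card A) * s + card A * (s / card A)^2"
    by (simp add: sum.distrib sum_subtractf sum_distrib_left s_def)
  also have "\<dots> = (\<Sum>x\<in>A. (f x)^2) - s^2 / card A"
    using \<open>card A > 0\<close> by (simp add: field_simps power2_eq_square)
  finally show ?thesis
    by (simp add: s_def)
qed simp

lemma card_mult_degree_variance:
  assumes "simple_graph V E"
  shows "real (card V) * degree_variance V E
           = (\<Sum>u\<in>V. real (degree E u)^2) - (2 * real (card E))^2 / card V"
proof (cases "V = {}")
  case False
  have finV: "finite V"
    using assms by (simp add: simple_graph_def)
  have sum_eq: "(\<Sum>u\<in>V. real (degree E u)) = 2 * real (card E)"
    using sum_degree[OF assms] by (metis of_nat_mult of_nat_numeral of_nat_sum)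
  have "card V > 0"
    using finV False by (simp add: card_gt_0_iff)
  then show ?thesis
    using sum_squared_deviation[OF finV, of "\<lambda>u. real (degree E u)"]
    by (simp add: degree_variance_def avg_degree_def sum_eq)
qed (simp add: degree_variance_def)

lemma arcs_eq_Sigma: "arcs V E = Sigma V (neighbors V E)"
  by (auto simp: arcs_def neighbors_def)

lemma sum_arcs_fst:
  fixes f :: "'a \<Rightarrow> 'b :: comm_semiring_1"
  assumes "simple_graph V E"
  shows "(\<Sum>(u, v)\<in>arcs V E. f u) = (\<Sum>u\<in>V. of_nat (degree E u) * f u)"
proof -
  have "finite V"
    using assms by (simp add: simple_graph_def)
  then have "(\<Sum>(u, v)\<in>arcs V E. f u) = (\<Sum>u\<in>V. \<Sum>v\<in>neighbors V E u. f u)"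
    unfolding arcs_eq_Sigma by (subst sum.Sigma) (auto simp: neighbors_def)
  then show ?thesis
    by (simp add: card_neighbors[OF assms])
qed

lemma sum_arcs_swap: "(\<Sum>(u, v)\<in>arcs V E. g u v) = (\<Sum>(u, v)\<in>arcs V E. g v u)"
  by (rule sum.reindex_bij_witness[where i = prod.swap and j = prod.swap])
    (auto simp: arcs_def insert_commute)

lemma irr_eq_sum_degree_sq_minus_arcs_min:
  assumes "simple_graph V E"
  shows "irr V E = (\<Sum>u\<in>V. real (degree E u)^2)
                   - (\<Sum>(u, v)\<in>arcs V E. min (real (degree E u)) (real (degree E v)))"
proof -
  define d where "d u = real (degree E u)" for u
  have fst: "(\<Sum>(u, v)\<in>arcs V E. d u) = (\<Sum>u\<in>V. d u^2)"
    using sum_arcs_fst[OF assms, of d] by (simp add: d_def power2_eq_square)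
  have "(\<Sum>(u, v)\<in>arcs V E. \<bar>d u - d v\<bar>)
          = (\<Sum>(u, v)\<in>arcs V E. d u + d v - 2 * min (d u) (d v))"
    by (rule sum.cong) (auto simp: abs_if min_def)
  also have "\<dots> = (\<Sum>(u, v)\<in>arcs V E. d u) + (\<Sum>(u, v)\<in>arcs V E. d v)
                   - 2 * (\<Sum>(u, v)\<in>arcs V E. min (d u) (d v))"
    by (simp add: sum.distrib sum_subtractf sum_distrib_left case_prod_beta)
  also have "(\<Sum>(u, v)\<in>arcs V E. d v) = (\<Sum>(u, v)\<in>arcs V E. d u)"
    by (rule sum_arcs_swap)
  finally show ?thesis
    unfolding irr_def arcs_def[symmetric] using fst by (simp add: d_def)
qed

lemma is_walk_Cons: "is_walk E (x # xs) \<longleftrightarrow> xs = [] \<or> {x, hd xs} \<in> E \<and> is_walk E xs"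
  by (cases xs) auto

lemma is_walk_snoc:
  "xs \<noteq> [] \<Longrightarrow> is_walk E (xs @ [y]) \<longleftrightarrow> is_walk E xs \<and> {last xs, y} \<in> E"
  by (induction E xs rule: is_walk.induct) auto

lemma is_walk_appendD2: "is_walk E (xs @ ys) \<Longrightarrow> ys \<noteq> [] \<Longrightarrow> is_walk E ys"
  by (induction xs) (auto simp: is_walk_Cons)

lemma is_walk_mono: "is_walk E' p \<Longrightarrow> E' \<subseteq> E \<Longrightarrow> is_walk E p"
  by (induction E' p rule: is_walk.induct) auto

lemma has_cycle_mono: "has_cycle E' \<Longrightarrow> E' \<subseteq> E \<Longrightarrow> has_cycle E"
  unfolding has_cycle_def using is_walk_mono by blast

lemma has_cycle_if_path_returns:
  assumes "is_walk E (a @ [x])" "distinct (a @ [x])"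
    and "y \<in> set a" "y \<noteq> last a" "{x, y} \<in> E"
  shows "has_cycle E"
proof -
  obtain a1 a2 where a: "a = a1 @ y # a2"
    using split_list[OF \<open>y \<in> set a\<close>] by blast
  define c where "c = y # a2 @ [x]"
  have "a2 \<noteq> []"
    using \<open>y \<noteq> last a\<close> a by auto
  then have "length c \<ge> 3"
    by (cases a2) (auto simp: c_def)
  moreover have "distinct c"
    using assms(2) a by (auto simp: c_def)
  moreover have "is_walk E c"
    using assms(1) a is_walk_appendD2[of E a1 c] by (simp add: c_def)
  then have "is_walk E (c @ [hd c])"
    using \<open>{x, y} \<in> E\<close> by (subst is_walk_snoc) (auto simp: c_def)
  ultimately show ?thesis
    unfolding has_cycle_def by blast
qed

lemma acyclic_ex_degree_le_1:
  assumes "simple_graph V E" "\<not> has_cycle E" "V \<noteq> {}"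
  shows "\<exists>v\<in>V. degree E v \<le> 1"
proof (rule ccontr)
  assume "\<not> ?thesis"
  then have deg: "\<And>v. v \<in> V \<Longrightarrow> 2 \<le> degree E v"
    by force
  define paths where "paths = {p. distinct p \<and> is_walk E p \<and> set p \<subseteq> V}"
  have finV: "finite V"
    using assms(1) by (simp add: simple_graph_def)
  obtain v where "v \<in> V"
    using assms(3) by blast
  then have "[v] \<in> paths"
    by (simp add: paths_def)
  moreover have "\<forall>p. p \<in> paths \<longrightarrow> length p < Suc (card V)"
    unfolding paths_def using finV by (metis card_mono distinct_card le_imp_less_Suc mem_Collect_eq)
  ultimately obtain p where p: "p \<in> paths" and longest: "\<And>q. q \<in> paths \<Longrightarrow> length q \<le> length p"
    using ex_has_greatest_nat[of "\<lambda>p. p \<in> paths" "[v]" length] by metis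
  define a x where "a = butlast p" and "x = last p"
  have "p \<noteq> []"
    using p by (auto simp: paths_def)
  then have p_eq: "p = a @ [x]"
    by (simp add: a_def x_def)
  have "x \<in> V"
    using p p_eq by (auto simp: paths_def)
  have nbrs_in_a: "y \<in> set a" if "y \<in> neighbors V E x" for y
  proof (rule ccontr)
    assume "y \<notin> set a"
    moreover have "{x, y} \<in> E" "y \<in> V" "y \<noteq> x"
      using that simple_graph_edgeD[OF assms(1)] by (auto simp: neighbors_def)
    ultimately have "p @ [y] \<in> paths"
      using p is_walk_snoc[of "a @ [x]" E y] unfolding p_eq paths_def by auto
    then show False
      using longest[of "p @ [y]"] by simp
  qed
  have "2 \<le> card (neighbors V E x)"
    using deg[OF \<open>x \<in> V\<close>] card_neighbors[OF assms(1)] by simp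
  then obtain y1 y2 where "y1 \<in> neighbors V E x" "y2 \<in> neighbors V E x" "y1 \<noteq> y2"
  proof -
    have "finite (neighbors V E x)"
      using finV by (simp add: neighbors_def)
    then show ?thesis
      using that \<open>2 \<le> card (neighbors V E x)\<close> card_le_Suc0_iff_eq[of "neighbors V E x"]
      by (metis not_less_eq_eq numeral_2_eq_2)
  qed
  then obtain y where "y \<in> neighbors V E x" "y \<noteq> last a"
    by blast
  then show False
    using has_cycle_if_path_returns[of E a x y] nbrs_in_a p p_eq assms(2)
    by (simp add: paths_def neighbors_def)
qed

lemma acyclic_card_edges_less:
  assumes "simple_graph V E" "\<not> has_cycle E" "V \<noteq> {}"
  shows "card E < card V"
  using assms
proof (induction "card V" arbitrary: V E rule: less_induct)
  case less
  obtain l where l: "l \<in> V" "degree E l \<le> 1"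
    using acyclic_ex_degree_le_1[OF less.prems] by blast
  have finV: "finite V"
    using less.prems(1) by (simp add: simple_graph_def)
  show ?case
  proof (cases "V = {l}")
    case True
    have "E = {}"
    proof -
      have "card e \<le> card {l}" if "e \<in> E" for e
        using that True less.prems(1) by (intro card_mono) (auto simp: simple_graph_def)
      then show ?thesis
        using less.prems(1) by (force simp: simple_graph_def)
    qed
    then show ?thesis
      using True by simp
  next
    case False
    define E' where "E' = {e \<in> E. l \<notin> e}"
    have "card E' < card (V - {l})"
    proof (rule less.hyps)
      show "card (V - {l}) < card V"
        using finV l(1) by (rule card_Diff1_less)
      show "simple_graph (V - {l}) E'"
        using less.prems(1) by (auto simp: simple_graph_def E'_def)
      show "\<not> has_cycle E'"
        using less.prems(2) has_cycle_mono[of E' E] by (auto simp: E'_def)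
      show "V - {l} \<noteq> {}"
        using False l(1) by auto
    qed
    moreover have "E = E' \<union> {e \<in> E. l \<in> e}"
      by (auto simp: E'_def)
    then have "card E \<le> card E' + degree E l"
      unfolding degree_def by (metis card_Un_le)
    ultimately show ?thesis
      using l finV by (simp add: card_Diff_singleton)
  qed
qed

definition walk_dist :: "'a set set \<Rightarrow> 'a \<Rightarrow> 'a \<Rightarrow> nat" where
  "walk_dist E u v = (LEAST k. \<exists>p. is_walk E p \<and> hd p = u \<and> last p = v \<and> length p = Suc k)"

lemma walk_dist_ex_closer_neighbor:
  assumes "connected_graph V E" "u \<in> V" "r \<in> V" "u \<noteq> r"
  shows "\<exists>w. {u, w} \<in> E \<and> walk_dist E w r < walk_dist E u r"
proof -
  define W where "W v k \<longleftrightarrow> (\<exists>p. is_walk E p \<and> hd p = v \<and> last p = r \<and> length p = Suc k)"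
    for v k
  obtain p0 where "is_walk E p0" "hd p0 = u" "last p0 = r"
    using assms(1-3) unfolding connected_graph_def by blast
  then have "W u (length p0 - 1)"
    unfolding W_def by (cases p0) auto
  then have "W u (walk_dist E u r)"
    unfolding walk_dist_def W_def[symmetric] by (rule LeastI)
  then obtain p where p: "is_walk E p" "hd p = u" "last p = r" "length p = Suc (walk_dist E u r)"
    unfolding W_def by blast
  then obtain q where "p = u # q"
    by (cases p) auto
  with p have q: "is_walk E (u # q)" "last (u # q) = r" "length q = walk_dist E u r"
    by auto
  then obtain w q' where "q = w # q'"
    using assms(4) by (cases q) auto
  have "W w (length q')"
    unfolding W_def using q \<open>q = w # q'\<close> by (intro exI[of _ q]) auto
  then have "walk_dist E w r \<le> length q'"
    unfolding walk_dist_def W_def[symmetric] by (rule Least_le)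
  then have "walk_dist E w r < walk_dist E u r"
    using q \<open>q = w # q'\<close> by simp
  then show ?thesis
    using q \<open>q = w # q'\<close> by auto
qed

lemma connected_ex_parent:
  assumes "connected_graph V E" "r \<in> V"
  obtains par where "\<And>v. v \<in> V - {r} \<Longrightarrow> {v, par v} \<in> E" "inj_on (\<lambda>v. {v, par v}) (V - {r})"
proof -
  have closer: "\<forall>v\<in>V - {r}. \<exists>w. {v, w} \<in> E \<and> walk_dist E w r < walk_dist E v r"
    using walk_dist_ex_closer_neighbor[OF assms(1) _ assms(2)] by blast
  obtain par where par: "\<And>v. v \<in> V - {r} \<Longrightarrow>
      {v, par v} \<in> E \<and> walk_dist E (par v) r < walk_dist E v r"
    using bchoice[OF closer] by blast
  have "inj_on (\<lambda>v. {v, par v}) (V - {r})"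
  proof (rule inj_onI)
    fix u v assume uv: "u \<in> V - {r}" "v \<in> V - {r}" "{u, par u} = {v, par v}"
    show "u = v"
    proof (rule ccontr)
      assume "u \<noteq> v"
      then have "u = par v" "v = par u"
        using uv(3) by (auto simp: doubleton_eq_iff)
      then show False
        using par[OF uv(1)] par[OF uv(2)] by simp
    qed
  qed
  then show ?thesis
    using par that by blast
qed

lemma tree_parent_bij:
  assumes "is_tree V E" "r \<in> V"
  obtains par where "bij_betw (\<lambda>v. {v, par v}) (V - {r}) E"
proof -
  have sg: "simple_graph V E" and "connected_graph V E" "\<not> has_cycle E"
    using assms(1) by (auto simp: is_tree_def)
  obtain par where par: "\<And>v. v \<in> V - {r} \<Longrightarrow> {v, par v} \<in> E"
    and inj: "inj_on (\<lambda>v. {v, par v}) (V - {r})"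
    using connected_ex_parent[OF \<open>connected_graph V E\<close> assms(2)] by blast
  have "finite V"
    using sg by (simp add: simple_graph_def)
  moreover have "card E < card V"
    using acyclic_card_edges_less[OF sg \<open>\<not> has_cycle E\<close>] assms(2) by blast
  ultimately have "card ((\<lambda>v. {v, par v}) ` (V - {r})) \<ge> card E"
    using assms(2) by (simp add: card_image[OF inj])
  moreover have "(\<lambda>v. {v, par v}) ` (V - {r}) \<subseteq> E"
    using par by blast
  ultimately have "(\<lambda>v. {v, par v}) ` (V - {r}) = E"
    using card_seteq[OF simple_graph_finite_edges[OF sg]] by blast
  then show ?thesis
    using inj that unfolding bij_betw_def by blast
qed

lemma sum_arcs_parent:
  assumes "simple_graph V E" "bij_betw (\<lambda>v. {v, par v}) A E"
  shows "(\<Sum>(u, v)\<in>arcs V E. g u v) = (\<Sum>v\<in>A. g v (par v) + g (par v) v)"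
proof -
  have edge: "{v, par v} \<in> E" if "v \<in> A" for v
    using assms(2) that by (auto dest: bij_betw_apply)
  have finA: "finite A"
    using assms bij_betw_finite simple_graph_finite_edges by blast
  have inj: "inj_on (\<lambda>v. {v, par v}) A"
    using assms(2) by (rule bij_betw_imp_inj_on)
  have up: "inj_on (\<lambda>v. (v, par v)) A" and down: "inj_on (\<lambda>v. (par v, v)) A"
    by (auto intro: inj_onI)
  have "arcs V E = (\<lambda>v. (v, par v)) ` A \<union> (\<lambda>v. (par v, v)) ` A"
  proof
    show "arcs V E \<subseteq> (\<lambda>v. (v, par v)) ` A \<union> (\<lambda>v. (par v, v)) ` A"
    proof clarify
      fix u w assume "(u, w) \<in> arcs V E" "(u, w) \<notin> (\<lambda>v. (par v, v)) ` A"
      moreover obtain v where "v \<in> A" "{u, w} = {v, par v}"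
        using \<open>(u, w) \<in> arcs V E\<close> bij_betw_imp_surj_on[OF assms(2)] by (force simp: arcs_def)
      ultimately show "(u, w) \<in> (\<lambda>v. (v, par v)) ` A"
        by (auto simp: doubleton_eq_iff)
    qed
    show "(\<lambda>v. (v, par v)) ` A \<union> (\<lambda>v. (par v, v)) ` A \<subseteq> arcs V E"
      using edge simple_graph_edgeD[OF assms(1)] by (auto simp: arcs_def insert_commute)
  qed
  moreover have "(\<lambda>v. (v, par v)) ` A \<inter> (\<lambda>v. (par v, v)) ` A = {}"
  proof (rule ccontr)
    assume "\<not> ?thesis"
    then obtain v w where vw: "v \<in> A" "w \<in> A" "v = par w" "par v = w"
      by auto
    then have "v = w"
      using inj_onD[OF inj, of v w] by (simp add: insert_commute)
    then show False
      using vw edge simple_graph_edgeD[OF assms(1)] by force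
  qed
  ultimately show ?thesis
    using finA up down by (simp add: sum.union_disjoint sum.reindex sum.distrib)
qed

lemma tree_sum_arcs_min_le:
  fixes f :: "'a \<Rightarrow> real"
  assumes "is_tree V E" "r \<in> V"
  shows "(\<Sum>(u, v)\<in>arcs V E. min (f u) (f v)) \<le> 2 * (\<Sum>v\<in>V - {r}. f v)"
proof -
  obtain par where "bij_betw (\<lambda>v. {v, par v}) (V - {r}) E"
    using tree_parent_bij[OF assms] .
  then have "(\<Sum>(u, v)\<in>arcs V E. min (f u) (f v))
               = (\<Sum>v\<in>V - {r}. min (f v) (f (par v)) + min (f (par v)) (f v))"
    using assms(1) by (simp add: sum_arcs_parent is_tree_def)
  also have "\<dots> \<le> (\<Sum>v\<in>V - {r}. 2 * f v)"
    by (rule sum_mono) linarith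
  finally show ?thesis
    by (simp add: sum_distrib_left)
qed

lemma tree_card_edges:
  assumes "is_tree V E"
  shows "card E = card V - 1"
proof -
  obtain r where "r \<in> V"
    using assms by (auto simp: is_tree_def connected_graph_def)
  then obtain par where "bij_betw (\<lambda>v. {v, par v}) (V - {r}) E"
    using tree_parent_bij[OF assms] by blast
  then show ?thesis
    using \<open>r \<in> V\<close> assms by (simp add: bij_betw_same_card[symmetric] is_tree_def simple_graph_def)
qed

lemma tree_ex_degree_ge_2:
  assumes "is_tree V E" "card V \<ge> 3"
  shows "\<exists>r\<in>V. 2 \<le> degree E r"
proof (rule ccontr)
  assume "\<not> ?thesis"
  then have "(\<Sum>u\<in>V. degree E u) \<le> card V"
    using sum_bounded_above[of V "degree E" 1] by force
  moreover have "(\<Sum>u\<in>V. degree E u) = 2 * (card V - 1)"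
    using assms(1) sum_degree[of V E] tree_card_edges[OF assms(1)] by (simp add: is_tree_def)
  ultimately show False
    using assms(2) by linarith
qed

theorem theorem1:
  fixes V :: "'a set" and E :: "'a set set"
  assumes "is_tree V E" and "card V \<ge> 3"
  shows "irr V E > real (card V) * degree_variance V E"
proof -
  define n m where "n = real (card V)" and "m = real (card E)"
  define d where "d u = real (degree E u)" for u
  have sg: "simple_graph V E"
    using assms(1) by (simp add: is_tree_def)
  obtain r where r: "r \<in> V" "2 \<le> d r"
    using tree_ex_degree_ge_2[OF assms] by (auto simp: d_def)
  have n_eq: "n = m + 1"
    using tree_card_edges[OF assms(1)] assms(2) by (simp add: n_def m_def)
  have "(\<Sum>v\<in>V - {r}. d v) = 2 * m - d r"
    using sum_degree[OF sg] sum.remove[of V r d] r sg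
    by (simp add: d_def m_def simple_graph_def flip: of_nat_sum)
  then have "(\<Sum>(u, v)\<in>arcs V E. min (d u) (d v)) \<le> 4 * m - 4"
    using tree_sum_arcs_min_le[OF assms(1) r(1), of d] r(2) by linarith
  also have "\<dots> < (2 * m)^2 / n"
  proof -
    have "(4 * m - 4) * n < (2 * m)^2"
      by (simp add: n_eq algebra_simps power2_eq_square)
    moreover have "n > 0"
      using assms(2) by (simp add: n_def)
    ultimately show ?thesis
      by (simp add: pos_less_divide_eq)
  qed
  finally show ?thesis
    using irr_eq_sum_degree_sq_minus_arcs_min[OF sg] card_mult_degree_variance[OF sg]
    by (simp add: d_def n_def m_def)
qed

end
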